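(* (1) Suppose $\psi(x)\ge c_0x$ on $[0,1]$ for some $c_0>0$. If $(x_N,x_T)\in\mathbb C^2$ with $|x_N|\le\min(1,c_0)|x_T|$, then for every $\delta\in(0,\delta_0]$, \[ |x_T|\le\kappa_{G_\psi}(p_\delta;(x_N,x_T))\le\max\left(1,\frac{|x_N|}{|x_T|}\cdot\frac{1}{1-\delta}\right)|x_T|. \] (2) Suppose $\frac{\psi(x)}{x}$ is a strictly increasing function on $(0,1)$, and let $\delta^*$ be the unique solution of $1-\delta=\frac{\delta}{\psi^{-1}(\delta)}$. If $0<\delta\le\delta^*$ and $|x_N|\le\min\left(1,\frac{\delta}{\psi^{-1}(\delta)}\right)|x_T|$, then $\kappa_{G_\psi}(p_\delta;(x_N,x_T))=|x_T|$.
   Context: $\mathbb D$ is the unit disc in $\mathbb C$. $\psi:[0,1]\to[0,\infty)$ is continuous with $\psi(0)=0$, $\psi(1)>0$, and $G_\psi:=\{z\in\mathbb D^2:\Re z_1<\psi(|z_2|)\}$. For $\delta\in(0,1)$, $p_\delta:=(-\delta,0)$. Standing assumption: $\delta\in(0,\delta_0]$ for a fixed $\delta_0<1$; $\psi^{-1}$ is the inverse of $\psi$ (defined where used). The Kobayashi–Royden metric of a domain $\Omega\subset\mathbb C^d$ is $\kappa_\Omega(z;X)=\inf\{\lambda^{-1}:\lambda>0,\ \exists\varphi:\mathbb D\to\Omega \text{ holomorphic},\ \varphi(0)=z,\ \varphi'(0)=\lambda X\}$. *)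

theory Defs
  imports "HOL-Analysis.Analysis"
begin

definition G :: "(real \<Rightarrow> real) \<Rightarrow> (complex \<times> complex) set" where
  "G psi = {z. cmod (fst z) < 1 \<and> cmod (snd z) < 1 \<and> Re (fst z) < psi (cmod (snd z))}"

definition pdelta :: "real \<Rightarrow> complex \<times> complex" where
  "pdelta d = (- complex_of_real d, 0)"

text \<open>Kobayashi--Royden metric: a holomorphic map from the unit disc into C^2 is
  given by its two holomorphic component functions.\<close>
definition kobayashi :: "(complex \<times> complex) set \<Rightarrow> complex \<times> complex \<Rightarrow> complex \<times> complex \<Rightarrow> real" where
  "kobayashi \<Omega> z X = Inf {1 / l | l. l > 0 \<and>
     (\<exists>f g. f holomorphic_on ball 0 1 \<and> g holomorphic_on ball 0 1 \<and>
        (\<forall>w\<in>ball 0 1. (f w, g w) \<in> \<Omega>) \<and> (f 0, g 0) = z \<and>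
        deriv f 0 = complex_of_real l * fst X \<and> deriv g 0 = complex_of_real l * snd X)}"

definition psi_inv :: "(real \<Rightarrow> real) \<Rightarrow> real \<Rightarrow> real" where
  "psi_inv psi = the_inv_into {0..1} psi"

end

theory Submission
  imports Defs "HOL-Complex_Analysis.Conformal_Mappings"
begin

text \<open>The lower bound is Schwarz's lemma for the second component of an extremal disc, which
  maps the unit disc into itself and fixes 0. The upper bounds come from affine discs
  \<open>w \<mapsto> p\<^sub>\<delta> + w \<lambda> X\<close>: such a disc lies in \<open>G\<^sub>\<psi>\<close> as soon as the line
  \<open>r \<mapsto> \<lambda>|x\<^sub>N| r - \<delta>\<close> stays below \<open>\<psi>(\<lambda>|x\<^sub>T| r)\<close> on \<open>[0,1)\<close>. If \<open>\<psi>(x)/x\<close> increases, the line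
  through \<open>(0,-\<delta>)\<close> of slope \<open>\<delta>/\<psi>\<^sup>-\<^sup>1(\<delta>)\<close> stays below \<open>\<psi>\<close>, and \<open>\<delta> \<le> \<delta>\<^sup>*\<close> makes this slope
  at most \<open>1 - \<delta>\<close>, so \<open>\<lambda> = 1/|x\<^sub>T|\<close> is admissible.\<close>

definition kobayashi_competitors ::
    "(complex \<times> complex) set \<Rightarrow> complex \<times> complex \<Rightarrow> complex \<times> complex \<Rightarrow> real set" where
  "kobayashi_competitors \<Omega> z X = {1 / l | l. l > 0 \<and>
     (\<exists>f g. f holomorphic_on ball 0 1 \<and> g holomorphic_on ball 0 1 \<and>
        (\<forall>w\<in>ball 0 1. (f w, g w) \<in> \<Omega>) \<and> (f 0, g 0) = z \<and>
        deriv f 0 = complex_of_real l * fst X \<and> deriv g 0 = complex_of_real l * snd X)}"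

lemma kobayashi_eq_Inf_competitors: "kobayashi \<Omega> z X = Inf (kobayashi_competitors \<Omega> z X)"
  by (simp add: kobayashi_def kobayashi_competitors_def)

lemma kobayashi_competitors_pos: "s \<in> kobayashi_competitors \<Omega> z X \<Longrightarrow> 0 < s"
  by (auto simp: kobayashi_competitors_def)

lemma kobayashi_le_competitor:
  assumes "s \<in> kobayashi_competitors \<Omega> z X"
  shows "kobayashi \<Omega> z X \<le> s"
proof -
  have "bdd_below (kobayashi_competitors \<Omega> z X)"
    by (rule bdd_belowI[of _ 0]) (auto dest: kobayashi_competitors_pos intro: less_imp_le)
  then show ?thesis
    unfolding kobayashi_eq_Inf_competitors using assms by (rule cInf_lower[rotated])
qed

lemma kobayashi_ge_norm_snd:
  assumes "\<forall>z\<in>\<Omega>. cmod (snd z) < 1" and "snd p = 0"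
    and "kobayashi_competitors \<Omega> p X \<noteq> {}"
  shows "cmod (snd X) \<le> kobayashi \<Omega> p X"
  unfolding kobayashi_eq_Inf_competitors
proof (rule cInf_greatest[OF assms(3)])
  fix s assume "s \<in> kobayashi_competitors \<Omega> p X"
  then obtain l f g where l: "l > 0" "s = 1 / l" and g: "g holomorphic_on ball 0 1"
    and disc: "\<forall>w\<in>ball 0 1. (f w, g w) \<in> \<Omega>" and "g 0 = 0"
    and dg: "deriv g 0 = complex_of_real l * snd X"
    using assms(2) by (auto simp: kobayashi_competitors_def)
  have "\<And>w. cmod w < 1 \<Longrightarrow> cmod (g w) < 1"
    using disc assms(1) by fastforce
  then have "l * cmod (snd X) \<le> 1"
    using Schwarz_Lemma(2)[OF g \<open>g 0 = 0\<close>, of 0] l by (simp add: dg norm_mult)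
  then show "cmod (snd X) \<le> s"
    using l by (simp add: pos_le_divide_eq mult.commute)
qed

lemma affine_disc_competitor:
  assumes "l > 0"
    and "\<And>w. cmod w < 1 \<Longrightarrow>
      (fst p + w * (of_real l * fst X), snd p + w * (of_real l * snd X)) \<in> \<Omega>"
  shows "1 / l \<in> kobayashi_competitors \<Omega> p X"
proof -
  have deriv_affine: "deriv (\<lambda>w. c + w * a) 0 = a" for c a :: complex
    by (rule DERIV_imp_deriv) (auto intro!: derivative_eq_intros)
  define f where "f w = fst p + w * (of_real l * fst X)" for w
  define g where "g w = snd p + w * (of_real l * snd X)" for w
  have "f holomorphic_on ball 0 1" "g holomorphic_on ball 0 1"
    unfolding f_def g_def by (intro holomorphic_intros)+
  moreover have "\<forall>w\<in>ball 0 1. (f w, g w) \<in> \<Omega>" "(f 0, g 0) = p"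
    using assms(2) by (simp_all add: f_def g_def)
  moreover have "deriv f 0 = of_real l * fst X" "deriv g 0 = of_real l * snd X"
    unfolding f_def[abs_def] g_def[abs_def] by (rule deriv_affine)+
  ultimately show ?thesis
    unfolding kobayashi_competitors_def using assms(1) by blast
qed

lemma kobayashi_zero_vector:
  assumes "p \<in> \<Omega>"
  shows "kobayashi \<Omega> p (0, 0) = 0"
proof -
  have competitor: "1 / l \<in> kobayashi_competitors \<Omega> p (0, 0)" if "l > 0" for l
    using affine_disc_competitor[OF that, of p] assms by simp
  have "kobayashi \<Omega> p (0, 0) \<le> 0"
  proof (rule field_le_epsilon)
    fix \<epsilon> :: real assume "0 < \<epsilon>"
    then show "kobayashi \<Omega> p (0, 0) \<le> 0 + \<epsilon>"
      using kobayashi_le_competitor[OF competitor[of "1 / \<epsilon>"]] by simp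
  qed
  moreover have "0 \<le> kobayashi \<Omega> p (0, 0)"
    unfolding kobayashi_eq_Inf_competitors using competitor[of 1]
    by (intro cInf_greatest) (auto dest: kobayashi_competitors_pos intro: less_imp_le)
  ultimately show ?thesis by simp
qed

lemma pdelta_in_G: "0 < \<delta> \<Longrightarrow> \<delta> < 1 \<Longrightarrow> 0 \<le> psi 0 \<Longrightarrow> pdelta \<delta> \<in> G psi"
  by (simp add: G_def pdelta_def)

lemma affine_disc_in_G:
  fixes a b w :: complex
  assumes "0 \<le> \<delta>" "\<delta> < 1" "cmod a \<le> 1 - \<delta>" "cmod b \<le> 1" "cmod w < 1"
    and below: "\<And>r. 0 \<le> r \<Longrightarrow> r < 1 \<Longrightarrow> cmod a * r - \<delta> < psi (cmod b * r)"
  shows "(- of_real \<delta> + w * a, w * b) \<in> G psi"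
proof -
  have "cmod (- of_real \<delta> + w * a) \<le> \<delta> + cmod a * cmod w"
    using norm_triangle_ineq[of "- of_real \<delta>" "w * a"] assms(1) by (simp add: norm_mult mult.commute)
  also have "\<dots> \<le> \<delta> + (1 - \<delta>) * cmod w"
    using assms(3) by (simp add: mult_right_mono)
  also have "\<dots> < \<delta> + (1 - \<delta>) * 1"
    using assms(2,5) by (intro add_strict_left_mono mult_strict_left_mono) auto
  finally have first: "cmod (- of_real \<delta> + w * a) < 1" by simp
  have second: "cmod (w * b) < 1"
    using assms(4,5) by (simp add: norm_mult mult_le_one le_less_trans[of _ "cmod w"] mult_left_le)
  have "Re (- of_real \<delta> + w * a) \<le> cmod a * cmod w - \<delta>"
    using complex_Re_le_cmod[of "w * a"] by (simp add: norm_mult mult.commute)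
  also have "\<dots> < psi (cmod (w * b))"
    using below[of "cmod w"] assms(5) by (simp add: norm_mult mult.commute)
  finally show ?thesis
    using first second by (simp add: G_def)
qed

lemma kobayashi_G_bounds:
  assumes "0 < \<delta>" "\<delta> < 1" "l > 0" "l * cmod xN \<le> 1 - \<delta>" "l * cmod xT \<le> 1"
    and "\<And>r. 0 \<le> r \<Longrightarrow> r < 1 \<Longrightarrow> l * cmod xN * r - \<delta> < psi (l * cmod xT * r)"
  shows "cmod xT \<le> kobayashi (G psi) (pdelta \<delta>) (xN, xT)"
    and "kobayashi (G psi) (pdelta \<delta>) (xN, xT) \<le> 1 / l"
proof -
  have "1 / l \<in> kobayashi_competitors (G psi) (pdelta \<delta>) (xN, xT)"
  proof (rule affine_disc_competitor)
    fix w :: complex assume "cmod w < 1"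
    with assms show "(fst (pdelta \<delta>) + w * (of_real l * fst (xN, xT)),
        snd (pdelta \<delta>) + w * (of_real l * snd (xN, xT))) \<in> G psi"
      unfolding pdelta_def fst_conv snd_conv add_0
      by (intro affine_disc_in_G) (auto simp: norm_mult)
  qed fact
  then show "cmod xT \<le> kobayashi (G psi) (pdelta \<delta>) (xN, xT)"
    and "kobayashi (G psi) (pdelta \<delta>) (xN, xT) \<le> 1 / l"
    using kobayashi_ge_norm_snd[of "G psi" "pdelta \<delta>" "(xN, xT)"] kobayashi_le_competitor
    by (auto simp: G_def pdelta_def)
qed

lemma kobayashi_G_if_psi_ge_linear:
  assumes psi_ge: "\<forall>x\<in>{0..1}. c0 * x \<le> psi x"
    and "0 < \<delta>" "\<delta> < 1" and xN: "cmod xN \<le> min 1 c0 * cmod xT"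
  shows "cmod xT \<le> kobayashi (G psi) (pdelta \<delta>) (xN, xT) \<and>
    kobayashi (G psi) (pdelta \<delta>) (xN, xT) \<le> max 1 (cmod xN / cmod xT * (1 / (1 - \<delta>))) * cmod xT"
proof (cases "xT = 0")
  case True
  with xN have "xN = 0" by simp
  moreover have "0 \<le> psi 0"
    using psi_ge[rule_format, of 0] by simp
  ultimately show ?thesis
    using True kobayashi_zero_vector[OF pdelta_in_G] assms(2,3) by simp
next
  case False
  define M where "M = max (cmod xT) (cmod xN / (1 - \<delta>))"
  have M: "0 < M" "cmod xT \<le> M" "cmod xN / (1 - \<delta>) \<le> M"
    using False by (auto simp: M_def less_max_iff_disj)
  then have N_le: "cmod xN / M \<le> 1 - \<delta>"
    using \<open>\<delta> < 1\<close> by (simp add: pos_divide_le_eq mult.commute)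
  have "cmod xN \<le> c0 * cmod xT"
    using xN mult_right_mono[OF min.cobounded2 norm_ge_zero] by (rule order_trans)
  have below: "cmod xN / M * r - \<delta> < psi (cmod xT / M * r)" if "0 \<le> r" "r < 1" for r
  proof -
    have "cmod xN / M * r \<le> c0 * cmod xT / M * r"
      using \<open>cmod xN \<le> c0 * cmod xT\<close> M(1) that(1) by (intro mult_right_mono divide_right_mono) auto
    also have "\<dots> = c0 * (cmod xT / M * r)"
      by simp
    also have "\<dots> \<le> psi (cmod xT / M * r)"
    proof -
      have "cmod xT / M * r \<le> 1"
        using M that by (intro mult_le_one) auto
      then show ?thesis
        using M(1) that(1) by (intro psi_ge[rule_format]) simp
    qed
    finally show ?thesis using \<open>0 < \<delta>\<close> by linarith
  qed
  have "cmod xT \<le> kobayashi (G psi) (pdelta \<delta>) (xN, xT) \<and>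
      kobayashi (G psi) (pdelta \<delta>) (xN, xT) \<le> 1 / (1 / M)"
    using kobayashi_G_bounds[of \<delta> "1 / M" xN xT psi] assms(2,3) M N_le below by simp
  moreover have "M = max 1 (cmod xN / cmod xT * (1 / (1 - \<delta>))) * cmod xT"
    using False by (simp add: M_def max_mult_distrib_right)
  ultimately show ?thesis by simp
qed

lemma continuous_on_ge_at_right_endpoint:
  fixes h :: "real \<Rightarrow> real"
  assumes "continuous_on {a..b} h" "a \<le> z" "z < b" "\<forall>w\<in>{z<..<b}. c \<le> h w"
  shows "c \<le> h b"
proof (rule tendsto_lowerbound)
  have "(h \<longlongrightarrow> h b) (at b within {a..b})"
    using assms(1-3) by (simp add: continuous_on_def)
  then show "(h \<longlongrightarrow> h b) (at b within {z<..<b})"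
    by (rule tendsto_within_subset) (use assms in auto)
  show "eventually (\<lambda>w. c \<le> h w) (at b within {z<..<b})"
    unfolding eventually_at_filter using assms(4) by auto
  show "at b within {z<..<b} \<noteq> bot"
    using islimpt_greaterThanLessThan2[OF assms(3)] by (simp add: trivial_limit_within)
qed

locale increasing_slope =
  fixes psi :: "real \<Rightarrow> real"
  assumes continuous: "continuous_on {0..1} psi"
    and nonneg: "\<forall>x\<in>{0..1}. psi x \<ge> 0"
    and zero: "psi 0 = 0"
    and slope_strict_mono: "strict_mono_on {0<..<1} (\<lambda>x. psi x / x)"
begin

lemma slope_less: "0 < x \<Longrightarrow> x < y \<Longrightarrow> y < 1 \<Longrightarrow> psi x / x < psi y / y"
  using slope_strict_mono by (auto simp: strict_mono_on_def)

lemma slope_mono: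
  assumes "0 < x" "x \<le> y" "y \<le> 1"
  shows "psi x / x \<le> psi y / y"
proof -
  consider "x = y" | "y < 1" "x < y" | "y = 1" "x < 1"
    using assms by linarith
  then show ?thesis
  proof cases
    case 3
    have cont: "continuous_on {x..1} (\<lambda>w. psi w / w)"
      using assms(1) by (intro continuous_intros continuous_on_subset[OF continuous]) auto
    have above: "\<forall>w\<in>{x<..<1}. psi x / x \<le> psi w / w"
      using assms(1) by (auto intro!: less_imp_le[OF slope_less])
    have "psi x / x \<le> psi 1 / 1"
      by (rule continuous_on_ge_at_right_endpoint[OF cont _ _ above]) (use 3 in auto)
    with 3 show ?thesis by simp
  qed (use assms in \<open>auto intro: less_imp_le slope_less\<close>)
qed

lemma slope_pos:
  assumes "0 < y" "y \<le> 1"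
  shows "0 < psi y / y"
proof -
  have "0 \<le> psi (y / 2) / (y / 2)"
    using nonneg assms by (simp add: zero_le_divide_iff)
  also have "\<dots> < psi (3 * y / 4) / (3 * y / 4)"
    using assms by (intro slope_less) auto
  also have "\<dots> \<le> psi y / y"
    using assms by (intro slope_mono) auto
  finally show ?thesis .
qed

lemma strict_mono: "strict_mono_on {0..1} psi"
proof (rule strict_mono_onI)
  fix x y :: real assume "x \<in> {0..1}" "y \<in> {0..1}" "x < y"
  then show "psi x < psi y"
  proof (cases "x = 0")
    case False
    with \<open>x \<in> {0..1}\<close> have "0 < x" by simp
    have "psi x = x * (psi x / x)"
      using \<open>0 < x\<close> by simp
    also have "\<dots> \<le> x * (psi y / y)"
      using \<open>0 < x\<close> \<open>x < y\<close> \<open>y \<in> {0..1}\<close> by (intro mult_left_mono slope_mono) auto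
    also have "\<dots> < y * (psi y / y)"
      using \<open>0 < x\<close> \<open>x < y\<close> \<open>y \<in> {0..1}\<close> slope_pos[of y] by (intro mult_strict_right_mono) auto
    finally show ?thesis
      using \<open>0 < x\<close> \<open>x < y\<close> by simp
  qed (use slope_pos[of y] zero in \<open>auto simp: zero_less_divide_iff\<close>)
qed

lemma psi_psi_inv:
  assumes "0 < d" "d \<le> psi 1"
  shows "0 < psi_inv psi d" "psi_inv psi d \<le> 1" "psi (psi_inv psi d) = d"
proof -
  obtain t where t: "0 \<le> t" "t \<le> 1" "psi t = d"
    using IVT'[of psi 0 d 1] continuous zero assms by auto
  then have "psi_inv psi d = t"
    unfolding psi_inv_def using the_inv_into_f_f[OF strict_mono_on_imp_inj_on[OF strict_mono], of t] by simp
  then show "0 < psi_inv psi d" "psi_inv psi d \<le> 1" "psi (psi_inv psi d) = d"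
    using t zero assms(1) by (auto simp: order_le_less)
qed

lemma line_below:
  assumes "0 < t" "t \<le> 1" and "0 \<le> a" "a \<le> psi t / t" and "0 \<le> r" "r < 1"
  shows "a * r - psi t < psi r"
proof (cases "r < t")
  case True
  have "a * r \<le> psi t / t * r"
    using assms by (intro mult_right_mono) auto
  also have "\<dots> < psi t"
    using True assms(1) slope_pos[OF assms(1,2)] by (simp add: field_simps)
  moreover have "0 \<le> psi r"
    using nonneg assms(5,6) by simp
  ultimately show ?thesis
    by simp
next
  case False
  have "a * r \<le> psi r / r * r"
    using False assms slope_mono[of t r] by (intro mult_right_mono) auto
  also have "\<dots> = psi r"
    using False assms(1) by simp
  finally show ?thesis
    using slope_pos[OF assms(1,2)] assms(1) by (simp add: zero_less_divide_iff)
qed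

lemma kobayashi_G_eq_norm_snd:
  assumes "0 < \<delta>" "\<delta> \<le> \<delta>s" "\<delta> < 1" "\<delta>s \<le> psi 1" "1 - \<delta>s = \<delta>s / psi_inv psi \<delta>s"
    and xN: "cmod xN \<le> min 1 (\<delta> / psi_inv psi \<delta>) * cmod xT"
  shows "kobayashi (G psi) (pdelta \<delta>) (xN, xT) = cmod xT"
proof (cases "xT = 0")
  case True
  with xN have "xN = 0" by simp
  with True show ?thesis
    using kobayashi_zero_vector[OF pdelta_in_G] assms(1,3) zero by simp
next
  case False
  define t where "t = psi_inv psi \<delta>"
  define ts where "ts = psi_inv psi \<delta>s"
  have t: "0 < t" "t \<le> 1" "psi t = \<delta>"
    using psi_psi_inv[of \<delta>] assms(1,2,4) by (auto simp: t_def)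
  have ts: "0 < ts" "ts \<le> 1" "psi ts = \<delta>s"
    using psi_psi_inv[of \<delta>s] assms(1,2,4) by (auto simp: ts_def)
  have "t \<le> ts"
  proof (rule ccontr)
    assume "\<not> t \<le> ts"
    then have "psi ts < psi t"
      using t ts by (intro strict_mono_onD[OF strict_mono]) auto
    with t ts assms(2) show False by simp
  qed
  have "\<delta> / t = psi t / t"
    using t by simp
  also have "\<dots> \<le> psi ts / ts"
    using t ts \<open>t \<le> ts\<close> by (intro slope_mono) auto
  also have "\<dots> = 1 - \<delta>s"
    using ts assms(5) by (simp add: ts_def)
  finally have slope_t: "\<delta> / t \<le> 1 - \<delta>"
    using assms(2) by simp
  have "cmod xN \<le> \<delta> / t * cmod xT"
    using xN mult_right_mono[OF min.cobounded2 norm_ge_zero] unfolding t_def by (rule order_trans)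
  then have N: "cmod xN / cmod xT \<le> \<delta> / t"
    using False by (simp add: divide_le_eq)
  have "cmod xN / cmod xT * r - \<delta> < psi r" if "0 \<le> r" "r < 1" for r
    using line_below[OF t(1,2) _ _ that, of "cmod xN / cmod xT"] N t(3) by simp
  then have "cmod xT \<le> kobayashi (G psi) (pdelta \<delta>) (xN, xT) \<and>
      kobayashi (G psi) (pdelta \<delta>) (xN, xT) \<le> 1 / (1 / cmod xT)"
    using kobayashi_G_bounds[of \<delta> "1 / cmod xT" xN xT psi] assms(1,3) False N slope_t by simp
  then show ?thesis by simp
qed

end

theorem proposition2:
  fixes psi :: "real \<Rightarrow> real" and \<delta>0 :: real
  assumes "continuous_on {0..1} psi"
    and "\<forall>x\<in>{0..1}. psi x \<ge> 0"
    and "psi 0 = 0" and "psi 1 > 0"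
    and "0 < \<delta>0" and "\<delta>0 < 1"
  shows
   "(\<forall>c0>0. (\<forall>x\<in>{0..1}. psi x \<ge> c0 * x) \<longrightarrow>
       (\<forall>xN xT \<delta>. 0 < \<delta> \<longrightarrow> \<delta> \<le> \<delta>0 \<longrightarrow> cmod xN \<le> min 1 c0 * cmod xT \<longrightarrow>
          cmod xT \<le> kobayashi (G psi) (pdelta \<delta>) (xN, xT) \<and>
          kobayashi (G psi) (pdelta \<delta>) (xN, xT)
            \<le> max 1 (cmod xN / cmod xT * (1 / (1 - \<delta>))) * cmod xT))
    \<and>
    (strict_mono_on {0<..<1} (\<lambda>x. psi x / x) \<longrightarrow>
       (\<forall>\<delta>s. 0 < \<delta>s \<and> \<delta>s \<le> psi 1 \<and> 1 - \<delta>s = \<delta>s / psi_inv psi \<delta>s \<and>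
              (\<forall>d. 0 < d \<and> d \<le> psi 1 \<and> 1 - d = d / psi_inv psi d \<longrightarrow> d = \<delta>s) \<longrightarrow>
          (\<forall>xN xT \<delta>. 0 < \<delta> \<longrightarrow> \<delta> \<le> \<delta>s \<longrightarrow> \<delta> \<le> \<delta>0 \<longrightarrow>
              cmod xN \<le> min 1 (\<delta> / psi_inv psi \<delta>) * cmod xT \<longrightarrow>
              kobayashi (G psi) (pdelta \<delta>) (xN, xT) = cmod xT)))"
proof (intro conjI allI impI)
  fix c0 xN xT \<delta>
  assume "\<forall>x\<in>{0..1}. c0 * x \<le> psi x" "0 < \<delta>" "\<delta> \<le> \<delta>0" "cmod xN \<le> min 1 c0 * cmod xT"
  with \<open>\<delta>0 < 1\<close> show "cmod xT \<le> kobayashi (G psi) (pdelta \<delta>) (xN, xT)"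
    and "kobayashi (G psi) (pdelta \<delta>) (xN, xT) \<le> max 1 (cmod xN / cmod xT * (1 / (1 - \<delta>))) * cmod xT"
    using kobayashi_G_if_psi_ge_linear[of c0 psi \<delta> xN xT] by auto
next
  fix \<delta>s xN xT \<delta>
  assume "strict_mono_on {0<..<1} (\<lambda>x. psi x / x)"
  with assms(1-3) interpret increasing_slope psi
    by unfold_locales
  assume "0 < \<delta>s \<and> \<delta>s \<le> psi 1 \<and> 1 - \<delta>s = \<delta>s / psi_inv psi \<delta>s \<and>
      (\<forall>d. 0 < d \<and> d \<le> psi 1 \<and> 1 - d = d / psi_inv psi d \<longrightarrow> d = \<delta>s)"
    and "0 < \<delta>" "\<delta> \<le> \<delta>s" "\<delta> \<le> \<delta>0" "cmod xN \<le> min 1 (\<delta> / psi_inv psi \<delta>) * cmod xT"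
  with \<open>\<delta>0 < 1\<close> show "kobayashi (G psi) (pdelta \<delta>) (xN, xT) = cmod xT"
    by (intro kobayashi_G_eq_norm_snd[of \<delta> \<delta>s]) auto
qed

end
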